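(* Let $M\subset E^2$ be a centrally symmetric convex body with center of symmetry $o$. For every triangle $\Delta$ inscribed in $M$ (i.e. with all vertices in the boundary of $M$) whose centroid is $o$, we have $M\subset 3\Delta$, where $3\Delta$ denotes the image of $\Delta$ under the homothety with center $o$ and ratio $3$.
   Context: A convex body is a compact convex set with nonempty interior. The centroid of a triangle is the average of its three vertices. *)

theory Defs
  imports "HOL-Analysis.Analysis"
begin

definition convex_body :: "(real^2) set \<Rightarrow> bool" where
  "convex_body M \<longleftrightarrow> compact M \<and> convex M \<and> interior M \<noteq> {}"

definition centrally_symmetric_about :: "(real^2) set \<Rightarrow> real^2 \<Rightarrow> bool" where
  "centrally_symmetric_about M z \<longleftrightarrow> (\<forall>x\<in>M. 2 *\<^sub>R z - x \<in> M)"

definition homothety :: "real^2 \<Rightarrow> real \<Rightarrow> real^2 \<Rightarrow> real^2" where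
  "homothety c r x = c + r *\<^sub>R (x - c)"

end

theory Submission
  imports Defs
begin

(* Put the centre z at the origin, so that a + b + c = 0. By symmetry M contains
   -b = a + c and -c = a + b, so a support line of M at the boundary point a has both
   on one side; hence M contains no point a - \<lambda> c - \<mu> b with \<lambda>, \<mu> > 0, for the support
   functional would then vanish on b and c. Writing x = \<alpha> b + \<beta> c, this excludes
   \<alpha>, \<beta> < -1, and symmetry once more excludes \<alpha>, \<beta> > 1. The six excluded open cones,
   at \<plusminus>a, \<plusminus>b, \<plusminus>c, cover the complement of 3\<Delta>. *)

lemma span_eq_UNIV_if_not_collinear:
  fixes a b c :: "'a::euclidean_space"
  assumes "DIM('a) = 2" and "\<not> collinear {a, b, c}"
  shows "span {b - a, c - a} = UNIV"
proof -
  have distinct: "a \<notin> {b, c}" "b \<noteq> c" and "\<not> affine_dependent {a, b, c}"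
    using assms(2) collinear_3_eq_affine_dependent by blast+
  then have "independent {b - a, c - a}"
    using affine_dependent_iff_dependent[of a "{b, c}"] by simp
  moreover have "card {b - a, c - a} = DIM('a)"
    using assms(1) distinct by auto
  ultimately show ?thesis
    using card_ge_dim_independent[of "{b - a, c - a}" UNIV] by auto
qed

lemma frontier_point_opposite_cone_notin:
  fixes M :: "'a::euclidean_space set"
  assumes "convex M" and "interior M \<noteq> {}" and "p \<in> frontier M"
    and "p + e \<in> M" and "p + f \<in> M" and "span {e, f} = UNIV"
    and "s > 0" and "t > 0"
  shows "p - s *\<^sub>R e - t *\<^sub>R f \<notin> M"
proof
  assume inside: "p - s *\<^sub>R e - t *\<^sub>R f \<in> M"
  have "p \<in> closure M" "p \<notin> rel_interior M"
    using assms(2,3) by (auto simp: frontier_def rel_interior_nonempty_interior)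
  then obtain d where "d \<noteq> 0" and supp: "\<And>y. y \<in> M \<Longrightarrow> d \<bullet> p \<le> d \<bullet> y"
    using supporting_hyperplane_relative_frontier[OF assms(1)] closure_subset by (metis subsetD)
  have "0 \<le> d \<bullet> e" "0 \<le> d \<bullet> f" "0 \<le> - s * (d \<bullet> e) - t * (d \<bullet> f)"
    using supp[OF assms(4)] supp[OF assms(5)] supp[OF inside]
    by (simp_all add: inner_diff_right inner_add_right)
  then have "s * (d \<bullet> e) = 0" "t * (d \<bullet> f) = 0"
    using assms(7,8) mult_nonneg_nonneg[of s "d \<bullet> e"] mult_nonneg_nonneg[of t "d \<bullet> f"]
    by linarith+
  then have "d \<bullet> e = 0" "d \<bullet> f = 0"
    using assms(7,8) by simp_all
  then have "orthogonal d d"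
    using orthogonal_to_span[of d "{e, f}" d] assms(6) by (auto simp: orthogonal_def)
  with \<open>d \<noteq> 0\<close> show False
    by (simp add: orthogonal_self)
qed

lemma span_pair_coordinates:
  fixes u v w :: "'a::real_vector"
  assumes "span {u, v} = UNIV"
  obtains s t where "w = s *\<^sub>R u + t *\<^sub>R v"
proof -
  obtain s where "w - s *\<^sub>R u \<in> span {v}"
    using span_breakdown_eq[of w u "{v}"] assms by auto
  then obtain t where "w - s *\<^sub>R u = t *\<^sub>R v"
    by (auto simp: span_singleton)
  then have "w = s *\<^sub>R u + t *\<^sub>R v"
    by (simp add: algebra_simps)
  then show ?thesis ..
qed

lemma centroid_vertex_diff:
  fixes p q r z :: "'a::real_vector"
  assumes "p + q + r = 3 *\<^sub>R z"
  shows "p - z = - (q - z) - (r - z)"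
  using assms scaleR_add_left[of 2 1 z] by (simp add: algebra_simps scaleR_2)

lemma centroid_triangle_span:
  fixes p q r z :: "'a::euclidean_space"
  assumes "DIM('a) = 2" and "\<not> collinear {p, q, r}" and "p + q + r = 3 *\<^sub>R z"
  shows "span {q - z, r - z} = UNIV"
proof -
  have "q - p = 2 *\<^sub>R (q - z) + (r - z)" "r - p = (q - z) + 2 *\<^sub>R (r - z)"
    using centroid_vertex_diff[OF assms(3)] by (simp_all add: algebra_simps scaleR_2)
  then have "span {q - p, r - p} \<subseteq> span {q - z, r - z}"
    by (simp add: span_minimal span_add span_scale span_base)
  then show ?thesis
    using span_eq_UNIV_if_not_collinear[OF assms(1,2)] by blast
qed

lemma centrally_symmetric_vertex_coords_bound:
  fixes M :: "(real^2) set" and z p q r x :: "real^2"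
  assumes "convex M" and "interior M \<noteq> {}" and "centrally_symmetric_about M z"
    and "p \<in> frontier M" and "q \<in> M" and "r \<in> M"
    and "\<not> collinear {p, q, r}" and "p + q + r = 3 *\<^sub>R z"
    and "x \<in> M" and "x - z = \<alpha> *\<^sub>R (q - z) + \<beta> *\<^sub>R (r - z)"
  shows "(-1 \<le> \<alpha> \<or> -1 \<le> \<beta>) \<and> (\<alpha> \<le> 1 \<or> \<beta> \<le> 1)"
proof -
  have p_eq: "p = z - (q - z) - (r - z)"
    using centroid_vertex_diff[OF assms(8)] by (simp add: algebra_simps)
  have span: "span {q - z, r - z} = UNIV"
    using centroid_triangle_span[OF _ assms(7,8)] by simp
  have reflect: "2 *\<^sub>R z - y \<in> M" if "y \<in> M" for y
    using assms(3) that unfolding centrally_symmetric_about_def by blast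
  have "p + (q - z) = 2 *\<^sub>R z - r" "p + (r - z) = 2 *\<^sub>R z - q"
    by (simp_all add: p_eq algebra_simps scaleR_2)
  then have "p + (q - z) \<in> M" "p + (r - z) \<in> M"
    using reflect[OF assms(6)] reflect[OF assms(5)] by simp_all
  have cone: "-1 \<le> \<alpha>' \<or> -1 \<le> \<beta>'"
    if "y \<in> M" and "y - z = \<alpha>' *\<^sub>R (q - z) + \<beta>' *\<^sub>R (r - z)" for y \<alpha>' \<beta>'
  proof (rule ccontr)
    assume "\<not> (-1 \<le> \<alpha>' \<or> -1 \<le> \<beta>')"
    then have "p - (-1 - \<alpha>') *\<^sub>R (q - z) - (-1 - \<beta>') *\<^sub>R (r - z) \<notin> M"
      using frontier_point_opposite_cone_notin[OF assms(1,2,4) \<open>p + (q - z) \<in> M\<close> \<open>p + (r - z) \<in> M\<close> span]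
      by simp
    moreover have "p - (-1 - \<alpha>') *\<^sub>R (q - z) - (-1 - \<beta>') *\<^sub>R (r - z) = y"
      using that(2) by (subst p_eq) (simp add: algebra_simps)
    ultimately show False
      using that(1) by simp
  qed
  have "(2 *\<^sub>R z - x) - z = (- \<alpha>) *\<^sub>R (q - z) + (- \<beta>) *\<^sub>R (r - z)"
    using assms(10) by (simp add: algebra_simps scaleR_2)
  then have "-1 \<le> - \<alpha> \<or> -1 \<le> - \<beta>"
    using cone reflect[OF assms(9)] by blast
  then show ?thesis
    using cone[OF assms(9,10)] by linarith
qed

lemma homothety_3_centroid_triangleI:
  fixes z a b c x :: "real^2"
  assumes "a + b + c = 3 *\<^sub>R z" and "x - z = s *\<^sub>R (a - z) + t *\<^sub>R (b - z)"
    and "-3 \<le> 2 * s - t" and "-3 \<le> 2 * t - s" and "s + t \<le> 3"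
  shows "x \<in> homothety z 3 ` (convex hull {a, b, c})"
proof -
  define y where "y = z + (1/3) *\<^sub>R (x - z)"
  have "x = homothety z 3 y"
    unfolding homothety_def y_def by simp
  moreover have "y = ((3 + 2 * s - t) / 9) *\<^sub>R a + ((3 + 2 * t - s) / 9) *\<^sub>R b + ((3 - s - t) / 9) *\<^sub>R c"
  proof -
    have x_eq: "x = z + s *\<^sub>R (a - z) + t *\<^sub>R (b - z)"
      using assms(2) by (simp add: algebra_simps)
    have c_eq: "c = z - (a - z) - (b - z)"
      using centroid_vertex_diff[of c a b z] assms(1) by (simp add: algebra_simps)
    show ?thesis
      unfolding y_def x_eq c_eq by (simp add: vec_eq_iff field_simps)
  qed
  then have "y \<in> convex hull {a, b, c}"
    using assms(3-5) unfolding convex_hull_3 by (fastforce simp: field_simps)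
  ultimately show ?thesis
    by blast
qed

theorem mainTheorem2:
  fixes M :: "(real^2) set" and z a b c :: "real^2"
  assumes "convex_body M"
    and "centrally_symmetric_about M z"
    and "a \<in> frontier M" and "b \<in> frontier M" and "c \<in> frontier M"
    and "\<not> collinear {a, b, c}"
    and "(1/3) *\<^sub>R (a + b + c) = z"
  shows "M \<subseteq> homothety z 3 ` (convex hull {a, b, c})"
proof
  fix x assume "x \<in> M"
  have "convex M" "closed M" "interior M \<noteq> {}"
    using assms(1) unfolding convex_body_def by (auto simp: compact_imp_closed)
  then have "a \<in> M" "b \<in> M" "c \<in> M"
    using assms(3-5) frontier_subset_closed by blast+
  have sum: "a + b + c = 3 *\<^sub>R z"
    using assms(7) by auto
  have "span {a - z, b - z} = UNIV"
    using centroid_triangle_span[of c a b] assms(6) sum by (simp add: insert_commute add_ac)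
  then obtain s t where st: "x - z = s *\<^sub>R (a - z) + t *\<^sub>R (b - z)"
    by (rule span_pair_coordinates)
  have c_eq: "c - z = - (a - z) - (b - z)"
    using centroid_vertex_diff[of c a b z] sum by (simp add: add_ac)
  note vertex_bound = centrally_symmetric_vertex_coords_bound[OF \<open>convex M\<close> \<open>interior M \<noteq> {}\<close> assms(2)]
  have "(-1 \<le> t - s \<or> -1 \<le> - s) \<and> (t - s \<le> 1 \<or> - s \<le> 1)"
    by (rule vertex_bound[OF assms(3) \<open>b \<in> M\<close> \<open>c \<in> M\<close> assms(6) sum \<open>x \<in> M\<close>])
       (simp add: st c_eq algebra_simps)
  moreover have "(-1 \<le> - t \<or> -1 \<le> s - t) \<and> (- t \<le> 1 \<or> s - t \<le> 1)"
    by (rule vertex_bound[OF assms(4) \<open>c \<in> M\<close> \<open>a \<in> M\<close> _ _ \<open>x \<in> M\<close>])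
       (use assms(6) sum in \<open>simp_all add: st c_eq algebra_simps insert_commute\<close>)
  moreover have "(-1 \<le> s \<or> -1 \<le> t) \<and> (s \<le> 1 \<or> t \<le> 1)"
    by (rule vertex_bound[OF assms(5) \<open>a \<in> M\<close> \<open>b \<in> M\<close> _ _ \<open>x \<in> M\<close> st])
       (use assms(6) sum in \<open>simp_all add: insert_commute add_ac\<close>)
  ultimately have "-3 \<le> 2 * s - t" "-3 \<le> 2 * t - s" "s + t \<le> 3"
    by linarith+
  then show "x \<in> homothety z 3 ` (convex hull {a, b, c})"
    using homothety_3_centroid_triangleI[OF sum st] by blast
qed

end
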